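(* If $X\subseteq V$ is such that $D[X]$ is a directed sub-block, then there exists a subsystem state $\psi^A_X$ with $A:X\to\{S,I\}$ belonging to $M_E$.
   Context: $D=(V,A)$ is a directed graph on $V=\{1,\dots,N\}$ with rates $T_{ij}\ge0$, $T_{ij}>0$ iff $(j,i)\in A$, $T_{ii}=0$. A subsystem state is $\psi^A_W$ with $W\subseteq V$ nonempty, $A:W\to\{S,I,R\}$; $S_i,I_i$ are single-node states; for $n\notin W$, $\psi^A_WI_n$ is the state on $W\cup\{n\}$ extending $A$ with $n$ in state $I$; $h^X_k(\psi^A_W)$ changes the state of $k\in W$ to $X$. $\mathrm{IN}(X)$ is the set of nodes from which some member of $X$ is reachable by a directed path; $f_E(X,Y,Z)=1$ iff $\mathrm{IN}(X)\cap\mathrm{IN}(Y)=\emptyset$ in $D-Z$ (else $0$), with the convention $f_E(\{n\},\emptyset,\{k\})=0$. A state $\psi^A_W$, $A:W\to\{S,I\}$, induces: $\psi^A_W$; $h^S_k(\psi^A_W)$ for $k\in W$ with $A_k=I$ and $T_{kn}>0$ for some $n\in W$ with $A_n=I$; and for each $k\in W$, $n\in V\setminus W$ with $T_{kn}>0$: the state $h^S_k(\psi^A_W)I_n$ if $f_E(\{n\},W\setminus\{k\},\{k\})=0$, or the states $h^S_k(\psi^A_W)$, $S_kI_n$, $S_k$ if it equals $1$. $M_E$ is the smallest set of subsystem states containing all $S_i,I_i$ and closed under induced states. $D[X]$ is the subgraph induced on $X$. A graph is biconnected if it has at least three vertices, is connected, and remains connected after deleting any single vertex. $D[X]$ is a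 directed sub-block if some node of $X$ is reachable by a directed path within $D[X]$ from every other node of $X$ and the underlying undirected graph of $D[X]$ is biconnected. *)

theory Defs
  imports Complex_Main
begin

(* Directed graph D = (V,A) on V = {1..N}, given by rates T :: nat => nat => real,
   with an arc (j,i) in A iff T i j > 0.  *)

datatype status = S | I | R

(* A subsystem state psi^A_W is a partial map with domain W (nonempty, W \<subseteq> V). *)
type_synonym sstate = "nat \<Rightarrow> status option"

definition Vset :: "nat \<Rightarrow> nat set" where
  "Vset N = {1..N}"

definition arc :: "(nat \<Rightarrow> nat \<Rightarrow> real) \<Rightarrow> nat \<Rightarrow> nat \<Rightarrow> bool" where
  "arc T j i \<longleftrightarrow> T i j > 0"

definition arcs_del :: "nat \<Rightarrow> (nat \<Rightarrow> nat \<Rightarrow> real) \<Rightarrow> nat set \<Rightarrow> (nat \<times> nat) set" where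
  "arcs_del N T Z = {(j,i). j \<in> Vset N - Z \<and> i \<in> Vset N - Z \<and> arc T j i}"

definition IN_del :: "nat \<Rightarrow> (nat \<Rightarrow> nat \<Rightarrow> real) \<Rightarrow> nat set \<Rightarrow> nat set \<Rightarrow> nat set" where
  "IN_del N T Z X = {u \<in> Vset N - Z. \<exists>x \<in> X - Z. (u, x) \<in> (arcs_del N T Z)\<^sup>*}"

definition fE :: "nat \<Rightarrow> (nat \<Rightarrow> nat \<Rightarrow> real) \<Rightarrow> nat set \<Rightarrow> nat set \<Rightarrow> nat set \<Rightarrow> nat" where
  "fE N T X Y Z =
     (if (\<exists>n k. X = {n} \<and> Y = {} \<and> Z = {k}) then 0
      else if IN_del N T Z X \<inter> IN_del N T Z Y = {} then 1 else 0)"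

definition single :: "nat \<Rightarrow> status \<Rightarrow> sstate" where
  "single i x = [i \<mapsto> x]"

definition hset :: "status \<Rightarrow> nat \<Rightarrow> sstate \<Rightarrow> sstate" where
  "hset x k \<psi> = \<psi>(k \<mapsto> x)"

definition addI :: "sstate \<Rightarrow> nat \<Rightarrow> sstate" where
  "addI \<psi> n = \<psi>(n \<mapsto> I)"

definition induced :: "nat \<Rightarrow> (nat \<Rightarrow> nat \<Rightarrow> real) \<Rightarrow> sstate \<Rightarrow> sstate set" where
  "induced N T \<psi> =
     {\<psi>}
     \<union> {hset S k \<psi> | k. k \<in> dom \<psi> \<and> \<psi> k = Some I \<and>
                          (\<exists>n \<in> dom \<psi>. \<psi> n = Some I \<and> T k n > 0)}
     \<union> {addI (hset S k \<psi>) n | k n. k \<in> dom \<psi> \<and> n \<in> Vset N - dom \<psi> \<and> T k n > 0 \<and>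
                          fE N T {n} (dom \<psi> - {k}) {k} = 0}
     \<union> \<Union>{{hset S k \<psi>, addI (single k S) n, single k S} | k n.
                          k \<in> dom \<psi> \<and> n \<in> Vset N - dom \<psi> \<and> T k n > 0 \<and>
                          fE N T {n} (dom \<psi> - {k}) {k} = 1}"

inductive_set ME :: "nat \<Rightarrow> (nat \<Rightarrow> nat \<Rightarrow> real) \<Rightarrow> sstate set"
  for N :: nat and T :: "nat \<Rightarrow> nat \<Rightarrow> real" where
  base_S: "i \<in> Vset N \<Longrightarrow> single i S \<in> ME N T"
| base_I: "i \<in> Vset N \<Longrightarrow> single i I \<in> ME N T"
| step: "\<psi> \<in> ME N T \<Longrightarrow> ran \<psi> \<subseteq> {S, I} \<Longrightarrow> \<phi> \<in> induced N T \<psi> \<Longrightarrow> \<phi> \<in> ME N T"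

definition arcs_in :: "(nat \<Rightarrow> nat \<Rightarrow> real) \<Rightarrow> nat set \<Rightarrow> (nat \<times> nat) set" where
  "arcs_in T X = {(j,i). j \<in> X \<and> i \<in> X \<and> arc T j i}"

definition uedges_in :: "(nat \<Rightarrow> nat \<Rightarrow> real) \<Rightarrow> nat set \<Rightarrow> (nat \<times> nat) set" where
  "uedges_in T X = {(u,v). u \<in> X \<and> v \<in> X \<and> (arc T u v \<or> arc T v u)}"

definition uconnected :: "(nat \<Rightarrow> nat \<Rightarrow> real) \<Rightarrow> nat set \<Rightarrow> bool" where
  "uconnected T X \<longleftrightarrow> (\<forall>u \<in> X. \<forall>v \<in> X. (u, v) \<in> (uedges_in T X)\<^sup>*)"

definition biconnected_under :: "(nat \<Rightarrow> nat \<Rightarrow> real) \<Rightarrow> nat set \<Rightarrow> bool" where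
  "biconnected_under T X \<longleftrightarrow>
     finite X \<and> card X \<ge> 3 \<and> uconnected T X \<and> (\<forall>x \<in> X. uconnected T (X - {x}))"

definition directed_sub_block :: "(nat \<Rightarrow> nat \<Rightarrow> real) \<Rightarrow> nat set \<Rightarrow> bool" where
  "directed_sub_block T X \<longleftrightarrow>
     (\<exists>r \<in> X. \<forall>u \<in> X. (u, r) \<in> (arcs_in T X)\<^sup>*) \<and> biconnected_under T X"

end

theory Submission
  imports Defs
begin

text \<open>Grow a state from the single susceptible root: while \<open>W \<subset> X\<close>, some arc \<open>n \<rightarrow> k\<close> of \<open>D[X]\<close>
  enters \<open>W\<close>, since everything reaches the root. Inside \<open>X - {k}\<close>, which is connected as an
  undirected graph, every vertex is an ancestor either of an in-neighbour of \<open>k\<close> outside \<open>W\<close> or of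
  a vertex of \<open>W - {k}\<close>, because its path to the root either enters \<open>k\<close> or avoids it. Both
  ancestor sets are closed under predecessors, so connectivity forces a common ancestor, i.e.
  \<open>f\<^sub>E({n}, W - {k}, {k}) = 0\<close>, and \<open>h\<^sup>S\<^sub>k(\<psi>)I\<^sub>n\<close> is an induced state on \<open>W \<union> {n}\<close>.\<close>

lemma rtrancl_crossing_edge:
  "(x, y) \<in> E\<^sup>* \<Longrightarrow> x \<in> P \<Longrightarrow> y \<notin> P \<Longrightarrow> \<exists>a b. (a, b) \<in> E \<and> a \<in> P \<and> b \<notin> P"
  by (induction rule: rtrancl_induct) blast+

lemma arcs_in_subset_arcs_del: "Y \<subseteq> Vset N - Z \<Longrightarrow> arcs_in T Y \<subseteq> arcs_del N T Z"
  by (auto simp: arcs_in_def arcs_del_def)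

lemma rtrancl_arcs_in_avoiding:
  assumes "(y, r) \<in> (arcs_in T X)\<^sup>*" and "y \<noteq> k"
  shows "\<exists>m. (y, m) \<in> (arcs_in T (X - {k}))\<^sup>* \<and> (m = r \<or> (m, k) \<in> arcs_in T X)"
  using assms
proof (induction rule: converse_rtrancl_induct)
  case base
  then show ?case by blast
next
  case (step y v)
  show ?case
  proof (cases "v = k")
    case True
    then show ?thesis using step.hyps(1) by blast
  next
    case False
    then obtain m where m: "(v, m) \<in> (arcs_in T (X - {k}))\<^sup>*" "m = r \<or> (m, k) \<in> arcs_in T X"
      using step.IH by blast
    have "(y, v) \<in> arcs_in T (X - {k})"
      using step.hyps(1) step.prems False by (auto simp: arcs_in_def)
    then show ?thesis using m by (blast intro: converse_rtrancl_into_rtrancl)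
  qed
qed

definition ancestors_in :: "(nat \<Rightarrow> nat \<Rightarrow> real) \<Rightarrow> nat set \<Rightarrow> nat set \<Rightarrow> nat set" where
  "ancestors_in T Y A = {y \<in> Y. \<exists>x \<in> A. (y, x) \<in> (arcs_in T Y)\<^sup>*}"

lemma ancestors_in_pred_closed:
  "(a, b) \<in> arcs_in T Y \<Longrightarrow> b \<in> ancestors_in T Y A \<Longrightarrow> a \<in> ancestors_in T Y A"
  unfolding ancestors_in_def arcs_in_def by (auto intro: converse_rtrancl_into_rtrancl)

lemma common_ancestor_if_uconnected:
  assumes conn: "uconnected T Y"
    and p: "p \<in> P" "p \<in> Y" and q: "q \<in> Q" "q \<in> Y"
    and cover: "Y \<subseteq> ancestors_in T Y P \<union> ancestors_in T Y Q"
  shows "ancestors_in T Y P \<inter> ancestors_in T Y Q \<noteq> {}"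
proof
  assume disj: "ancestors_in T Y P \<inter> ancestors_in T Y Q = {}"
  have "p \<in> ancestors_in T Y P" "q \<in> ancestors_in T Y Q"
    using p q unfolding ancestors_in_def by blast+
  moreover have "(p, q) \<in> (uedges_in T Y)\<^sup>*" using conn p q unfolding uconnected_def by blast
  ultimately obtain a b where
    ab: "(a, b) \<in> uedges_in T Y" "a \<in> ancestors_in T Y P" "b \<notin> ancestors_in T Y P"
    using rtrancl_crossing_edge[of p q _ "ancestors_in T Y P"] disj by blast
  then have "b \<in> ancestors_in T Y Q" using cover unfolding uedges_in_def by blast
  consider "(a, b) \<in> arcs_in T Y" | "(b, a) \<in> arcs_in T Y"
    using ab(1) unfolding uedges_in_def arcs_in_def by blast
  then show False
    using ancestors_in_pred_closed ab \<open>b \<in> ancestors_in T Y Q\<close> disj by cases blast+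
qed

lemma fE_zero_if_common_ancestor:
  assumes "c \<in> Vset N - {k}" "(c, n) \<in> (arcs_del N T {k})\<^sup>*" "n \<noteq> k"
    and "w \<in> W - {k}" "(c, w) \<in> (arcs_del N T {k})\<^sup>*"
  shows "fE N T {n} (W - {k}) {k} = 0"
proof -
  have "c \<in> IN_del N T {k} {n} \<inter> IN_del N T {k} (W - {k})"
    using assms unfolding IN_del_def by blast
  then show ?thesis unfolding fE_def by auto
qed

lemma directed_sub_block_extension:
  assumes XV: "X \<subseteq> Vset N"
    and rW: "r \<in> W" and WX: "W \<subset> X"
    and root: "\<forall>u\<in>X. (u, r) \<in> (arcs_in T X)\<^sup>*"
    and conn: "\<forall>x\<in>X. uconnected T (X - {x})"
  shows "\<exists>n\<in>X - W. \<exists>k\<in>W. T k n > 0 \<and> fE N T {n} (W - {k}) {k} = 0"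
proof -
  obtain u0 where "u0 \<in> X - W" using WX by blast
  then obtain n0 k where n0k: "(n0, k) \<in> arcs_in T X" "n0 \<notin> W" "k \<in> W"
    using rtrancl_crossing_edge[of u0 r _ "- W"] root rW by blast
  then have n0: "n0 \<in> X - W" "T k n0 > 0" by (auto simp: arcs_in_def arc_def)
  show ?thesis
  proof (cases "W - {k} = {}")
    case True
    \<comment> \<open>the convention \<open>f\<^sub>E({n}, {}, {k}) = 0\<close>\<close>
    then show ?thesis using n0 n0k(3) by (auto simp: fE_def)
  next
    case False
    then obtain w0 where w0: "w0 \<in> W - {k}" by blast
    define Y where "Y = X - {k}"
    define P where "P = {n \<in> X - W. T k n > 0}"
    let ?anc = "ancestors_in T Y"
    have "Y \<subseteq> ?anc P \<union> ?anc (W - {k})"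
    proof
      fix y assume "y \<in> Y"
      then obtain m where m: "(y, m) \<in> (arcs_in T Y)\<^sup>*" "m = r \<or> (m, k) \<in> arcs_in T X"
        using rtrancl_arcs_in_avoiding[of y r T X k] root unfolding Y_def by blast
      have "m \<in> Y"
        using m(1) \<open>y \<in> Y\<close> by (cases rule: rtranclE) (auto simp: arcs_in_def)
      then have "m \<in> P \<union> (W - {k})"
        using m(2) rW unfolding Y_def P_def arcs_in_def arc_def by blast
      then show "y \<in> ?anc P \<union> ?anc (W - {k})"
        using m(1) \<open>y \<in> Y\<close> unfolding ancestors_in_def by blast
    qed
    moreover have "n0 \<in> P" "n0 \<in> Y" "w0 \<in> Y" using n0 n0k(3) w0 WX unfolding P_def Y_def by auto
    ultimately obtain c where c: "c \<in> ?anc P" "c \<in> ?anc (W - {k})"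
      using common_ancestor_if_uconnected[of T Y n0 P w0 "W - {k}"] conn w0 n0k(3) WX
      unfolding Y_def by blast
    obtain n w where nw: "n \<in> P" "(c, n) \<in> (arcs_in T Y)\<^sup>*" "w \<in> W - {k}" "(c, w) \<in> (arcs_in T Y)\<^sup>*"
      using c unfolding ancestors_in_def by blast
    have "arcs_in T Y \<subseteq> arcs_del N T {k}"
      using XV unfolding Y_def by (intro arcs_in_subset_arcs_del) blast
    then have "fE N T {n} (W - {k}) {k} = 0"
      using nw c XV rtrancl_mono[of "arcs_in T Y" "arcs_del N T {k}"] n0k(3)
      by (intro fE_zero_if_common_ancestor[of c]) (auto simp: ancestors_in_def Y_def P_def)
    then show ?thesis using nw(1) n0k(3) unfolding P_def by blast
  qed
qed

lemma ME_extend_by_infected: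
  assumes "\<psi> \<in> ME N T" "ran \<psi> \<subseteq> {S, I}"
    and "k \<in> dom \<psi>" "n \<in> Vset N - dom \<psi>" "T k n > 0" "fE N T {n} (dom \<psi> - {k}) {k} = 0"
  shows "\<exists>\<phi>. dom \<phi> = insert n (dom \<psi>) \<and> ran \<phi> \<subseteq> {S, I} \<and> \<phi> \<in> ME N T"
proof (intro exI conjI)
  let ?\<phi> = "addI (hset S k \<psi>) n"
  have "?\<phi> \<in> induced N T \<psi>" unfolding induced_def using assms(3-6) by blast
  then show "?\<phi> \<in> ME N T" using ME.step assms(1,2) by blast
  show "dom ?\<phi> = insert n (dom \<psi>)" using assms(3) by (auto simp: addI_def hset_def)
  have "ran ?\<phi> \<subseteq> ran \<psi> \<union> {S, I}" by (auto simp: addI_def hset_def ran_def)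
  then show "ran ?\<phi> \<subseteq> {S, I}" using assms(2) by blast
qed

lemma ME_state_extends:
  assumes "finite X" "X \<subseteq> Vset N" "W \<subseteq> X"
    and "\<exists>\<psi>. dom \<psi> = W \<and> ran \<psi> \<subseteq> {S, I} \<and> \<psi> \<in> ME N T"
    and "\<And>W'. W \<subseteq> W' \<Longrightarrow> W' \<subset> X \<Longrightarrow>
           \<exists>n\<in>X - W'. \<exists>k\<in>W'. T k n > 0 \<and> fE N T {n} (W' - {k}) {k} = 0"
  shows "\<exists>\<psi>. dom \<psi> = X \<and> ran \<psi> \<subseteq> {S, I} \<and> \<psi> \<in> ME N T"
  using assms(3-5)
proof (induction "card (X - W)" arbitrary: W rule: less_induct)
  case (less W)
  show ?case
  proof (cases "W = X")
    case True
    then show ?thesis using less.prems(2) by blast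
  next
    case False
    then obtain n k where nk: "n \<in> X - W" "k \<in> W" "T k n > 0" "fE N T {n} (W - {k}) {k} = 0"
      using less.prems(1,3) by blast
    obtain \<psi> where \<psi>: "dom \<psi> = W" "ran \<psi> \<subseteq> {S, I}" "\<psi> \<in> ME N T" using less.prems(2) by blast
    have "\<exists>\<phi>. dom \<phi> = insert n W \<and> ran \<phi> \<subseteq> {S, I} \<and> \<phi> \<in> ME N T"
    proof -
      have "n \<in> Vset N - dom \<psi>" using nk(1) \<psi>(1) assms(2) by blast
      then show ?thesis
        using ME_extend_by_infected[OF \<psi>(3,2)] nk(2-4) unfolding \<psi>(1) by blast
    qed
    moreover have "card (X - insert n W) < card (X - W)"
      using nk(1) \<open>finite X\<close> by (intro psubset_card_mono) auto
    moreover have "insert n W \<subseteq> X" using nk(1) less.prems(1) by blast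
    moreover have "\<exists>n\<in>X - W'. \<exists>k\<in>W'. T k n > 0 \<and> fE N T {n} (W' - {k}) {k} = 0"
      if "insert n W \<subseteq> W'" "W' \<subset> X" for W'
      using less.prems(3) that by blast
    ultimately show ?thesis using less.hyps by blast
  qed
qed

theorem mainTheorem9:
  fixes N :: nat and T :: "nat \<Rightarrow> nat \<Rightarrow> real" and X :: "nat set"
  assumes nonneg: "\<forall>i j. T i j \<ge> 0"
    and diag: "\<forall>i. T i i = 0"
    and supp: "\<forall>i j. T i j > 0 \<longrightarrow> i \<in> Vset N \<and> j \<in> Vset N"
    and XV: "X \<subseteq> Vset N"
    and blk: "directed_sub_block T X"
  shows "\<exists>\<psi> :: sstate. dom \<psi> = X \<and> ran \<psi> \<subseteq> {S, I} \<and> \<psi> \<in> ME N T"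
proof -
  \<comment> \<open>Only the arcs of \<open>D\<close> matter.\<close>
  obtain r where rX: "r \<in> X" and root: "\<forall>u\<in>X. (u, r) \<in> (arcs_in T X)\<^sup>*"
    using blk unfolding directed_sub_block_def by blast
  have finX: "finite X" and conn: "\<forall>x\<in>X. uconnected T (X - {x})"
    using blk unfolding directed_sub_block_def biconnected_under_def by auto
  have "dom (single r S) = {r} \<and> ran (single r S) \<subseteq> {S, I} \<and> single r S \<in> ME N T"
    using ME.base_S rX XV by (auto simp: single_def)
  then show ?thesis
    using ME_state_extends[of X N "{r}"] directed_sub_block_extension[OF XV _ _ root conn]
      finX XV rX by blast
qed

end
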